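(* Under the standing setup and the algorithm/assumptions described in the context, there exists a constant $\chi>0$ such that for every pair of integers $1\le\underline{k}\le\overline{k}$, $$\min_{\underline{k}\le n\le\overline{k}}\mathcal{M}_{\bar\gamma}^{F_n,\phi}(x_n)\ \le\ \sqrt{\frac{\chi}{\sum_{n=\underline{k}}^{\overline{k}}\mu_n}}.$$
   Context: Standing setup: $\mathcal{X},\mathcal{Z}$ finite-dimensional real Hilbert spaces; $\phi:\mathcal{X}\to\mathbb{R}\cup\{+\infty\}$ proper lower semicontinuous convex; $h:\mathcal{X}\to\mathbb{R}$ differentiable with $\nabla h$ Lipschitz on $\mathrm{dom}\,\phi$; $\mathfrak{S}:\mathcal{X}\to\mathcal{Z}$ continuously differentiable; $g:\mathcal{Z}\to\mathbb{R}$ Lipschitz with constant $L_g>0$ and $\eta$-weakly convex ($g+\frac\eta2\|\cdot\|^2$ convex, $\eta>0$); $F:=h+g\circ\mathfrak{S}$ and $\mathrm{argmin}_x(F+\phi)\ne\emptyset$. Notation: $\mathrm{prox}_{\gamma\phi}(\bar x)=\mathrm{argmin}_x(\phi(x)+\frac1{2\gamma}\|x-\bar x\|^2)$; Moreau envelope ${}^{\mu}g(\bar z)=\min_z(g(z)+\frac1{2\mu}\|z-\bar z\|^2)$ for $\mu\in(0,\eta^{-1})$ (continuously differentiable). $F_n:=h+{}^{\mu_n}g\circ\mathfrak{S}$, and for $\gamma>0$, $\mathcal{M}_\gamma^{F_n,\phi}(x)=\|(x-\mathrm{prox}_{\gamma\phi}(x-\gamma\nabla F_n(x)))/\gamma\|$.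 Algorithm and assumptions: fix $x_1\in\mathrm{dom}\,\phi$ and $c\in(0,1)$. (a) $(\mu_n)\subset(0,\frac{1}{2\eta}]$ with $\mu_n\to0$, $\sum_n\mu_n=+\infty$, and there is $M\ge1$ with $M^{-1}\le\mu_{n+1}/\mu_n\le1$ for all $n$. (b) Each $\nabla F_n$ is Lipschitz continuous on $\mathrm{dom}\,\phi$ with constant $L_{\nabla F_n}=\varpi_1+\varpi_2\mu_n^{-1}$ for some fixed $\varpi_1\ge0$, $\varpi_2>0$. (c) Stepsizes $\gamma_n>0$ satisfy the Armijo-type condition $(F_n+\phi)(\mathrm{prox}_{\gamma_n\phi}(x_n-\gamma_n\nabla F_n(x_n)))\le(F_n+\phi)(x_n)-c\gamma_n(\mathcal{M}_{\gamma_n}^{F_n,\phi}(x_n))^2$, and there are $\beta>0$, $\bar\gamma>0$ with $\beta L_{\nabla F_n}^{-1}\le\gamma_n\le\bar\gamma$ for all $n$. (d) Iterates: $x_{n+1}=\mathrm{prox}_{\gamma_n\phi}(x_n-\gamma_n\nabla F_n(x_n))$. *)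

theory Defs
  imports "HOL-Analysis.Analysis"
begin

definition edom :: "('a \<Rightarrow> ereal) \<Rightarrow> 'a set" where
  "edom f = {x. f x < \<infinity>}"

definition proper_fun :: "('a \<Rightarrow> ereal) \<Rightarrow> bool" where
  "proper_fun f \<longleftrightarrow> (\<forall>x. f x \<noteq> -\<infinity>) \<and> (\<exists>x. f x < \<infinity>)"

definition lsc_fun :: "('a::topological_space \<Rightarrow> ereal) \<Rightarrow> bool" where
  "lsc_fun f \<longleftrightarrow> (\<forall>X x. X \<longlonglongrightarrow> x \<longrightarrow> f x \<le> liminf (\<lambda>n. f (X n)))"

definition econvex :: "('a::real_vector \<Rightarrow> ereal) \<Rightarrow> bool" where
  "econvex f \<longleftrightarrow> (\<forall>x y t. 0 < t \<and> t < 1 \<longrightarrow>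
      f ((1 - t) *\<^sub>R x + t *\<^sub>R y) \<le> ereal (1 - t) * f x + ereal t * f y)"

text \<open>Proximal map: the (unique, for proper lsc convex phi) minimizer.\<close>
definition prox :: "real \<Rightarrow> ('a::real_normed_vector \<Rightarrow> ereal) \<Rightarrow> 'a \<Rightarrow> 'a" where
  "prox \<gamma> \<phi> xb = (SOME x. \<forall>y. \<phi> x + ereal (norm (x - xb)^2 / (2*\<gamma>))
                              \<le> \<phi> y + ereal (norm (y - xb)^2 / (2*\<gamma>)))"

definition moreau_env :: "real \<Rightarrow> ('a::real_normed_vector \<Rightarrow> real) \<Rightarrow> 'a \<Rightarrow> real" where
  "moreau_env \<mu> g zb = (INF z. g z + norm (z - zb)^2 / (2*\<mu>))"

definition grad :: "('a::real_inner \<Rightarrow> real) \<Rightarrow> 'a \<Rightarrow> 'a" where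
  "grad f x = (THE D. GDERIV f x :> D)"

definition resid :: "real \<Rightarrow> ('a::real_inner \<Rightarrow> real) \<Rightarrow> ('a \<Rightarrow> ereal) \<Rightarrow> 'a \<Rightarrow> real" where
  "resid \<gamma> F \<phi> x = norm ((x - prox \<gamma> \<phi> (x - \<gamma> *\<^sub>R grad F x)) /\<^sub>R \<gamma>)"

end

theory Submission
  imports Defs
begin

(* Along the iteration, the Armijo condition lowers (F_n + phi)(x_n) by c gamma_n M_{gamma_n}(x_n)^2,
   while replacing mu_n by mu_{n+1} <= mu_n raises the Moreau envelope of the L_g-Lipschitz g by
   at most (mu_n - mu_{n+1}) L_g^2/2. Hence E_n = (F_n + phi)(x_n) + mu_n L_g^2/2 is nonincreasing,
   and it is bounded below by min (F + phi) because g - mu L_g^2/2 <= env_mu g. Since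
   gamma_n >= kappa mu_n and the residual M_gamma is nonincreasing in gamma (so that
   M_{gamma_n} >= M_{gammabar}), summing the descent inequalities over k_lo..k_hi gives
   c kappa (min M_{gammabar})^2 (sum mu_n) <= E_1 - min (F + phi). *)

lemma mult_le_sq_div_add_sq:
  fixes L r \<mu> :: real
  assumes "0 < \<mu>"
  shows "L * r \<le> r^2 / (2*\<mu>) + \<mu> * L^2 / 2"
proof -
  have "0 \<le> (r - \<mu> * L)^2 / (2*\<mu>)" using assms by simp
  also have "\<dots> = r^2 / (2*\<mu>) + \<mu> * L^2 / 2 - L * r"
    using assms by (simp add: field_simps power2_eq_square)
  finally show ?thesis by simp
qed

section \<open>Proximal points\<close>

lemma lsc_fun_bounded_below_on_compact:
  fixes \<phi> :: "'a::metric_space \<Rightarrow> ereal"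
  assumes pr: "proper_fun \<phi>" and ls: "lsc_fun \<phi>" and K: "compact K"
  shows "\<exists>m. \<forall>y\<in>K. ereal m \<le> \<phi> y"
proof (rule ccontr)
  assume "\<not> ?thesis"
  then have "\<forall>n::nat. \<exists>y\<in>K. \<phi> y < ereal (-real n)"
    by (metis not_le)
  then obtain Y where Y: "\<And>n. Y n \<in> K" "\<And>n. \<phi> (Y n) < ereal (-real n)"
    by metis
  obtain l r where l: "l \<in> K" "strict_mono r" "(Y \<circ> r) \<longlonglongrightarrow> l"
    using compact_imp_seq_compact[OF K] Y(1) unfolding seq_compact_def by metis
  have "((\<lambda>n. \<phi> (Y (r n))) \<longlongrightarrow> -\<infinity>) sequentially"
    unfolding tendsto_MInfty
  proof
    fix c
    obtain N::nat where N: "real N \<ge> -c" using real_arch_simple by blast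
    show "eventually (\<lambda>n. \<phi> (Y (r n)) < ereal c) sequentially"
      unfolding eventually_sequentially
    proof (intro exI allI impI)
      fix n assume "n \<ge> N"
      then have "r n \<ge> N" using seq_suble[OF l(2), of n] by linarith
      then have "ereal (-real (r n)) \<le> ereal c" using N by simp
      then show "\<phi> (Y (r n)) < ereal c" using Y(2)[of "r n"] by order
    qed
  qed
  then have "liminf (\<lambda>n. \<phi> (Y (r n))) = -\<infinity>"
    by (intro lim_imp_Liminf) auto
  moreover have "\<phi> l \<le> liminf (\<lambda>n. \<phi> ((Y \<circ> r) n))"
    using ls l(3) unfolding lsc_fun_def by blast
  ultimately have "\<phi> l = -\<infinity>" by simp
  then show False using pr unfolding proper_fun_def by blast
qed

text \<open>Outside the unit ball around \<open>y0\<close>, compare with the point where the segment from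
  \<open>y0\<close> to \<open>y\<close> leaves the ball.\<close>
lemma econvex_lsc_cone_minorant:
  fixes \<phi> :: "'a::{real_normed_vector,heine_borel} \<Rightarrow> ereal"
  assumes pr: "proper_fun \<phi>" and ls: "lsc_fun \<phi>" and cv: "econvex \<phi>"
    and y0: "\<phi> y0 = ereal f0"
  shows "\<exists>A K. K \<ge> 0 \<and> (\<forall>y. ereal (A - K * norm (y - y0)) \<le> \<phi> y)"
proof -
  obtain m where m: "\<And>y. y \<in> cball y0 1 \<Longrightarrow> ereal m \<le> \<phi> y"
    using lsc_fun_bounded_below_on_compact[OF pr ls compact_cball] by blast
  define m' where "m' = min m f0"
  define K where "K = f0 - m'"
  have K0: "K \<ge> 0" unfolding K_def m'_def by simp
  have "ereal (f0 - K - K * norm (y - y0)) \<le> \<phi> y" for y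
  proof (cases "\<phi> y")
    case PInf then show ?thesis by simp
  next
    case MInf then show ?thesis using pr unfolding proper_fun_def by blast
  next
    case (real v)
    show ?thesis
    proof (cases "norm (y - y0) \<le> 1")
      case True
      then have "ereal m \<le> \<phi> y" using m by (simp add: dist_norm norm_minus_commute)
      then have "m \<le> v" using real by simp
      moreover have "f0 - K - K * norm (y - y0) \<le> m'"
        using K0 unfolding K_def by simp
      ultimately show ?thesis using real unfolding m'_def by simp
    next
      case False
      define r where "r = norm (y - y0)"
      have r1: "r > 1" using False r_def by simp
      define s where "s = 1 / r"
      have s: "0 < s" "s < 1" using r1 unfolding s_def by auto
      define z where "z = (1 - s) *\<^sub>R y0 + s *\<^sub>R y"
      have "z - y0 = s *\<^sub>R (y - y0)" unfolding z_def by (simp add: algebra_simps)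
      then have "norm (z - y0) = 1"
        using r1 unfolding s_def r_def by (auto simp: norm_minus_commute)
      then have "ereal m \<le> \<phi> z" using m by (simp add: dist_norm norm_minus_commute)
      also have "\<phi> z \<le> ereal (1 - s) * \<phi> y0 + ereal s * \<phi> y"
        using cv s unfolding econvex_def z_def by blast
      finally have "m' \<le> (1 - s) * f0 + s * v" using y0 real unfolding m'_def by simp
      then have "r * m' \<le> r * ((1 - s) * f0 + s * v)" using r1 by simp
      also have "\<dots> = (r - 1) * f0 + v" using r1 unfolding s_def by (simp add: field_simps)
      finally have "f0 - K * r \<le> v" unfolding K_def by (simp add: algebra_simps)
      then show ?thesis using real K0 unfolding r_def by simp
    qed
  qed
  then show ?thesis using K0 by blast
qed

lemma lsc_add_continuous_attains_min:
  fixes \<phi> :: "'a::{real_normed_vector,heine_borel} \<Rightarrow> ereal" and q :: "'a \<Rightarrow> real"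
  assumes pr: "proper_fun \<phi>" and ls: "lsc_fun \<phi>" and q: "continuous_on UNIV q"
    and c: "0 < c" and growth: "\<And>y. ereal (L0 + c * norm (y - a)^2) \<le> \<phi> y + ereal (q y)"
  shows "\<exists>p. \<forall>y. \<phi> p + ereal (q p) \<le> \<phi> y + ereal (q y)"
proof -
  define f where "f y = \<phi> y + ereal (q y)" for y
  define I where "I = (INF y. f y)"
  have I_le: "I \<le> f y" for y unfolding I_def by (rule INF_lower) simp
  have "ereal L0 \<le> f y" for y
    using growth[of y] c unfolding f_def by (simp add: order_trans[rotated])
  then have "ereal L0 \<le> I" unfolding I_def by (rule INF_greatest)
  moreover obtain y0 where "\<phi> y0 < \<infinity>" using pr unfolding proper_fun_def by blast
  then have "f y0 < \<infinity>" unfolding f_def by simp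
  then have "I < \<infinity>" using I_le[of y0] by order
  ultimately obtain I' where I': "I = ereal I'" by (cases I) auto
  have "\<exists>y. f y < ereal (I' + inverse (real (Suc n)))" for n
  proof -
    have "I < ereal (I' + inverse (real (Suc n)))" using I' by simp
    then show ?thesis unfolding I_def by (simp add: INF_less_iff)
  qed
  then obtain Y where Y: "\<And>n. f (Y n) < ereal (I' + inverse (real (Suc n)))" by metis
  have "Y n \<in> cball a (sqrt ((I' + 1 - L0) / c))" for n
  proof -
    have "inverse (real (Suc n)) \<le> 1" by (simp add: inverse_le_1_iff)
    then have "ereal (I' + inverse (real (Suc n))) \<le> ereal (I' + 1)" by simp
    then have "ereal (L0 + c * norm (Y n - a)^2) \<le> ereal (I' + 1)"
      using growth[of "Y n"] Y[of n] unfolding f_def by order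
    then have "norm (Y n - a)^2 \<le> (I' + 1 - L0) / c" using c by (simp add: field_simps)
    then show ?thesis by (simp add: dist_norm norm_minus_commute real_le_rsqrt)
  qed
  then obtain p r where p: "strict_mono r" "(Y \<circ> r) \<longlonglongrightarrow> p"
    using compact_imp_seq_compact[OF compact_cball] unfolding seq_compact_def by metis
  define u where "u n = I' + inverse (real (Suc (r n))) - q (Y (r n))" for n
  have "\<phi> (Y (r n)) \<le> ereal (u n)" for n
    using Y[of "r n"] unfolding f_def u_def by (cases "\<phi> (Y (r n))") auto
  then have "liminf (\<lambda>n. \<phi> (Y (r n))) \<le> liminf (\<lambda>n. ereal (u n))"
    by (intro Liminf_mono) auto
  moreover have "(\<lambda>n. inverse (real (Suc (r n)))) \<longlonglongrightarrow> 0"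
    using LIMSEQ_subseq_LIMSEQ[OF LIMSEQ_inverse_real_of_nat p(1)] by (simp add: o_def)
  then have "u \<longlonglongrightarrow> I' + 0 - q p"
    unfolding u_def using p(2) q by (intro tendsto_intros continuous_on_tendsto_compose[OF q])
      (auto simp: o_def)
  then have "liminf (\<lambda>n. ereal (u n)) = ereal (I' - q p)"
    by (intro lim_imp_Liminf) auto
  moreover have "\<phi> p \<le> liminf (\<lambda>n. \<phi> ((Y \<circ> r) n))"
    using ls p(2) unfolding lsc_fun_def by blast
  ultimately have "\<phi> p \<le> ereal (I' - q p)" by (simp add: o_def)
  then have "f p \<le> I" unfolding f_def I' by (cases "\<phi> p") auto
  then show ?thesis using I_le unfolding f_def by (metis order_trans)
qed

lemma prox_objective_quadratic_growth:
  fixes \<phi> :: "'a::{real_normed_vector,heine_borel} \<Rightarrow> ereal"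
  assumes pr: "proper_fun \<phi>" and ls: "lsc_fun \<phi>" and cv: "econvex \<phi>" and \<gamma>: "0 < \<gamma>"
  shows "\<exists>L0. \<forall>y. ereal (L0 + 1 / (4*\<gamma>) * norm (y - a)^2)
                   \<le> \<phi> y + ereal (norm (y - a)^2 / (2*\<gamma>))"
proof -
  obtain y0 where "\<phi> y0 < \<infinity>" "\<phi> y0 \<noteq> -\<infinity>" using pr unfolding proper_fun_def by blast
  then obtain f0 where "\<phi> y0 = ereal f0" by (cases "\<phi> y0") auto
  then obtain A K where K: "K \<ge> 0" and cone: "\<And>y. ereal (A - K * norm (y - y0)) \<le> \<phi> y"
    using econvex_lsc_cone_minorant[OF pr ls cv] by blast
  define d where "d = norm (y0 - a)"
  have "ereal (A - K * d - \<gamma> * K^2 + 1 / (4*\<gamma>) * norm (y - a)^2)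
      \<le> \<phi> y + ereal (norm (y - a)^2 / (2*\<gamma>))" for y
  proof -
    have "norm (y - y0) \<le> norm (y - a) + d"
      unfolding d_def using norm_triangle_ineq[of "y - a" "a - y0"]
      by (simp add: norm_minus_commute)
    then have "K * norm (y - y0) \<le> K * norm (y - a) + K * d"
      using K by (simp add: mult_left_mono distrib_left[symmetric])
    moreover have "K * norm (y - a) \<le> norm (y - a)^2 / (4*\<gamma>) + \<gamma> * K^2"
      using mult_le_sq_div_add_sq[of "2*\<gamma>" K "norm (y - a)"] \<gamma> by simp
    ultimately have "A - K * d - \<gamma> * K^2 + 1 / (4*\<gamma>) * norm (y - a)^2
        \<le> A - K * norm (y - y0) + norm (y - a)^2 / (2*\<gamma>)"
      by (simp add: field_simps)
    then have "ereal (A - K * d - \<gamma> * K^2 + 1 / (4*\<gamma>) * norm (y - a)^2)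
        \<le> ereal (A - K * norm (y - y0)) + ereal (norm (y - a)^2 / (2*\<gamma>))"
      by simp
    also have "\<dots> \<le> \<phi> y + ereal (norm (y - a)^2 / (2*\<gamma>))"
      using cone by (rule add_right_mono)
    finally show ?thesis .
  qed
  then show ?thesis by blast
qed

lemma prox_minimizes:
  fixes \<phi> :: "'a::{real_normed_vector,heine_borel} \<Rightarrow> ereal"
  assumes pr: "proper_fun \<phi>" and ls: "lsc_fun \<phi>" and cv: "econvex \<phi>" and \<gamma>: "0 < \<gamma>"
  shows "\<phi> (prox \<gamma> \<phi> a) + ereal (norm (prox \<gamma> \<phi> a - a)^2 / (2*\<gamma>))
           \<le> \<phi> y + ereal (norm (y - a)^2 / (2*\<gamma>))"
proof -
  obtain L0 where growth: "\<And>y. ereal (L0 + 1 / (4*\<gamma>) * norm (y - a)^2)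
                          \<le> \<phi> y + ereal (norm (y - a)^2 / (2*\<gamma>))"
    using prox_objective_quadratic_growth[OF assms] by blast
  then have "\<exists>p. \<forall>y. \<phi> p + ereal (norm (p - a)^2 / (2*\<gamma>)) \<le> \<phi> y + ereal (norm (y - a)^2 / (2*\<gamma>))"
    using \<gamma> by (intro lsc_add_continuous_attains_min[OF pr ls _ _ growth]) (auto intro!: continuous_intros)
  then show ?thesis unfolding prox_def by (rule someI_ex[where P = "\<lambda>p. \<forall>y. _ p y", THEN spec])
qed

lemma prox_finite:
  fixes \<phi> :: "'a::{real_normed_vector,heine_borel} \<Rightarrow> ereal"
  assumes pr: "proper_fun \<phi>" and "lsc_fun \<phi>" and "econvex \<phi>" and "0 < \<gamma>"
  shows "\<exists>v. \<phi> (prox \<gamma> \<phi> a) = ereal v"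
proof -
  obtain y0 where "\<phi> y0 < \<infinity>" using pr unfolding proper_fun_def by blast
  then have "\<phi> y0 + ereal (norm (y0 - a)^2 / (2*\<gamma>)) < \<infinity>" by simp
  then have "\<phi> (prox \<gamma> \<phi> a) + ereal (norm (prox \<gamma> \<phi> a - a)^2 / (2*\<gamma>)) < \<infinity>"
    using prox_minimizes[OF assms, of a y0] by order
  moreover have "\<phi> (prox \<gamma> \<phi> a) \<noteq> -\<infinity>" using pr unfolding proper_fun_def by blast
  ultimately show ?thesis by (cases "\<phi> (prox \<gamma> \<phi> a)") auto
qed

lemma prox_iterates_finite:
  fixes \<phi> :: "'a::{real_normed_vector,heine_borel} \<Rightarrow> ereal"
  assumes pr: "proper_fun \<phi>" and ls: "lsc_fun \<phi>" and cv: "econvex \<phi>"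
    and start: "x k \<in> edom \<phi>" and \<gamma>: "\<And>n. k \<le> n \<Longrightarrow> 0 < \<gamma> n"
    and iter: "\<And>n. k \<le> n \<Longrightarrow> x (Suc n) = prox (\<gamma> n) \<phi> (z n)"
    and "k \<le> n"
  shows "\<exists>v. \<phi> (x n) = ereal v"
  using \<open>k \<le> n\<close>
proof (induction n rule: dec_induct)
  case base
  then show ?case
    using start pr unfolding edom_def proper_fun_def by (cases "\<phi> (x k)") auto
next
  case (step m)
  show ?case unfolding iter[OF step(1)] using prox_finite[OF pr ls cv \<gamma>[OF step(1)]] .
qed

section \<open>The prox-gradient residual\<close>

lemma le_of_le_add_small_multiple:
  fixes A B C :: real
  assumes C: "0 \<le> C" and le: "\<And>t. 0 < t \<Longrightarrow> t < 1 \<Longrightarrow> A \<le> B + t * C"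
  shows "A \<le> B"
proof (rule field_le_epsilon)
  fix e :: real assume e: "0 < e"
  define t where "t = min (1/2) (e / (C + 1))"
  have t: "0 < t" "t < 1" using e C unfolding t_def by auto
  have "t * C \<le> (e / (C + 1)) * C" using C unfolding t_def by (intro mult_right_mono) auto
  also have "\<dots> \<le> e" using C e by (simp add: field_simps)
  finally show "A \<le> B + e" using le[OF t] by linarith
qed

text \<open>The optimality condition \<open>(a - p)/\<gamma> \<in> \<partial>\<phi>(p)\<close> for \<open>p = prox \<gamma> \<phi> a\<close>, obtained by comparing
  \<open>p\<close> with the points \<open>(1 - t) p + t y\<close> and letting \<open>t \<rightarrow> 0\<close>.\<close>
lemma prox_subgradient_ineq:
  fixes \<phi> :: "'a::{real_inner,heine_borel} \<Rightarrow> ereal"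
  assumes pr: "proper_fun \<phi>" and ls: "lsc_fun \<phi>" and cv: "econvex \<phi>" and \<gamma>: "0 < \<gamma>"
    and p: "p = prox \<gamma> \<phi> a" and vp: "\<phi> p = ereal vp" and vy: "\<phi> y = ereal vy"
  shows "vp + inner (a - p) (y - p) / \<gamma> \<le> vy"
proof -
  have "vp \<le> vy + inner (p - a) (y - p) / \<gamma> + t * (norm (y - p)^2 / (2*\<gamma>))"
    if t: "0 < t" "t < 1" for t
  proof -
    define yt where "yt = (1 - t) *\<^sub>R p + t *\<^sub>R y"
    have "\<phi> yt \<le> ereal ((1 - t) * vp + t * vy)"
      using cv t vp vy unfolding econvex_def yt_def by (metis times_ereal.simps(1) plus_ereal.simps(1))
    have "\<phi> p + ereal (norm (p - a)^2 / (2*\<gamma>)) \<le> \<phi> yt + ereal (norm (yt - a)^2 / (2*\<gamma>))"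
      using prox_minimizes[OF pr ls cv \<gamma>, of a yt] p by simp
    also have "\<dots> \<le> ereal ((1 - t) * vp + t * vy) + ereal (norm (yt - a)^2 / (2*\<gamma>))"
      using \<open>\<phi> yt \<le> _\<close> by (rule add_right_mono)
    finally have "vp + norm (p - a)^2 / (2*\<gamma>) \<le> (1 - t) * vp + t * vy + norm (yt - a)^2 / (2*\<gamma>)"
      using vp by simp
    moreover have "norm (yt - a)^2 = norm (p - a)^2 + 2 * t * inner (p - a) (y - p) + t^2 * norm (y - p)^2"
    proof -
      have "yt - a = (p - a) + t *\<^sub>R (y - p)" unfolding yt_def by (simp add: algebra_simps)
      then show ?thesis
        unfolding power2_norm_eq_inner
        by (simp only:) (simp add: inner_add_left inner_add_right inner_commute algebra_simps power2_eq_square)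
    qed
    moreover have "(norm (p - a)^2 + 2 * t * inner (p - a) (y - p) + t^2 * norm (y - p)^2) / (2*\<gamma>)
        = norm (p - a)^2 / (2*\<gamma>) + (2 * t * inner (p - a) (y - p) + t^2 * norm (y - p)^2) / (2*\<gamma>)"
      by (simp add: add_divide_distrib)
    ultimately have "t * vp \<le> t * vy + (2 * t * inner (p - a) (y - p) + t^2 * norm (y - p)^2) / (2*\<gamma>)"
      by (simp add: algebra_simps)
    also have "\<dots> = t * (vy + inner (p - a) (y - p) / \<gamma> + t * (norm (y - p)^2 / (2*\<gamma>)))"
      using \<gamma> by (simp add: field_simps power2_eq_square)
    finally show ?thesis using t by simp
  qed
  then have "vp \<le> vy + inner (p - a) (y - p) / \<gamma>"
    by (rule le_of_le_add_small_multiple[rotated]) (use \<gamma> in auto)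
  moreover have "inner (p - a) (y - p) = - inner (a - p) (y - p)" by (simp add: inner_diff_left)
  ultimately show ?thesis by simp
qed

lemma norm_le_of_inner_scaled_diff_nonneg:
  fixes u v :: "'a::real_inner"
  assumes \<gamma>: "0 < \<gamma>" "\<gamma> \<le> \<gamma>'" and nonneg: "0 \<le> inner (u - v) (\<gamma>' *\<^sub>R v - \<gamma> *\<^sub>R u)"
  shows "norm v \<le> norm u"
proof (rule ccontr)
  assume "\<not> ?thesis"
  then have uv: "norm u < norm v" by simp
  have "\<gamma>' * norm v ^2 + \<gamma> * norm u ^2 \<le> (\<gamma> + \<gamma>') * (u \<bullet> v)"
    using nonneg by (simp add: power2_norm_eq_inner inner_diff_left inner_diff_right inner_commute algebra_simps)
  also have "\<dots> \<le> (\<gamma> + \<gamma>') * (norm u * norm v)"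
    using \<gamma> by (intro mult_left_mono norm_cauchy_schwarz) auto
  finally have "(\<gamma>' * norm v - \<gamma> * norm u) * (norm v - norm u) \<le> 0"
    by (simp add: algebra_simps power2_eq_square)
  moreover have "\<gamma> * norm u \<le> \<gamma>' * norm u" using \<gamma> by (intro mult_right_mono) auto
  then have "\<gamma> * norm u < \<gamma>' * norm v" using \<gamma> uv by (smt (verit) mult_strict_left_mono)
  ultimately show False using uv by (simp add: mult_le_0_iff)
qed

text \<open>With \<open>u\<close>, \<open>v\<close> the residual vectors for \<open>\<gamma> \<le> \<gamma>'\<close>, monotonicity of \<open>\<partial>\<phi>\<close> at the two
  prox points gives \<open>\<langle>u - v, \<gamma>' v - \<gamma> u\<rangle> \<ge> 0\<close>.\<close>
lemma resid_antimono_stepsize: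
  fixes \<phi> :: "'a::{real_inner,heine_borel} \<Rightarrow> ereal"
  assumes pr: "proper_fun \<phi>" and ls: "lsc_fun \<phi>" and cv: "econvex \<phi>"
    and \<gamma>: "0 < \<gamma>" "\<gamma> \<le> \<gamma>'"
  shows "resid \<gamma>' F \<phi> x \<le> resid \<gamma> F \<phi> x"
proof -
  define d where "d = grad F x"
  define p where "p = prox \<gamma> \<phi> (x - \<gamma> *\<^sub>R d)"
  define q where "q = prox \<gamma>' \<phi> (x - \<gamma>' *\<^sub>R d)"
  define u where "u = (x - p) /\<^sub>R \<gamma>"
  define v where "v = (x - q) /\<^sub>R \<gamma>'"
  have \<gamma>': "0 < \<gamma>'" using \<gamma> by simp
  obtain vp where vp: "\<phi> p = ereal vp" using prox_finite[OF pr ls cv \<gamma>(1)] p_def by blast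
  obtain vq where vq: "\<phi> q = ereal vq" using prox_finite[OF pr ls cv \<gamma>'] q_def by blast
  have p_eq: "p = x - \<gamma> *\<^sub>R u" and q_eq: "q = x - \<gamma>' *\<^sub>R v"
    using \<gamma> \<gamma>' unfolding u_def v_def by simp_all
  have "inner ((x - \<gamma> *\<^sub>R d) - p) (q - p) / \<gamma> = inner (u - d) (q - p)"
    using \<gamma> unfolding p_eq by (simp add: inner_diff_left algebra_simps field_simps)
  then have sub_p: "vp + inner (u - d) (q - p) \<le> vq"
    using prox_subgradient_ineq[OF pr ls cv \<gamma>(1) p_def vp vq] by simp
  have "inner ((x - \<gamma>' *\<^sub>R d) - q) (p - q) / \<gamma>' = inner (v - d) (p - q)"
    using \<gamma>' unfolding q_eq by (simp add: inner_diff_left algebra_simps field_simps)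
  then have sub_q: "vq + inner (v - d) (p - q) \<le> vp"
    using prox_subgradient_ineq[OF pr ls cv \<gamma>' q_def vq vp] by simp
  from sub_p sub_q have "0 \<le> inner (u - v) (p - q)"
    by (simp add: inner_diff_left inner_diff_right algebra_simps)
  then have "norm v \<le> norm u"
    by (intro norm_le_of_inner_scaled_diff_nonneg[OF \<gamma>]) (simp add: p_eq q_eq)
  then show ?thesis unfolding resid_def u_def v_def p_def q_def d_def .
qed

section \<open>Moreau envelope of a Lipschitz function\<close>

lemma lipschitz_on_UNIV_le_add:
  fixes g :: "'z::metric_space \<Rightarrow> real"
  assumes "lipschitz_on L UNIV g"
  shows "g w \<le> g z + L * dist w z"
  using lipschitz_onD[OF assms, of w z] by (simp add: dist_real_def abs_le_iff)

lemma moreau_env_term_lower_bound: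
  fixes g :: "'z::real_normed_vector \<Rightarrow> real"
  assumes lip: "lipschitz_on L UNIV g" and \<mu>: "0 < \<mu>"
  shows "g z - \<mu> * L^2 / 2 \<le> g w + norm (w - z)^2 / (2*\<mu>)"
  using lipschitz_on_UNIV_le_add[OF lip, of z w] mult_le_sq_div_add_sq[OF \<mu>, of L "norm (w - z)"]
  by (simp add: dist_norm norm_minus_commute)

lemma moreau_env_lower_bound:
  fixes g :: "'z::real_normed_vector \<Rightarrow> real"
  assumes "lipschitz_on L UNIV g" and "0 < \<mu>"
  shows "g z - \<mu> * L^2 / 2 \<le> moreau_env \<mu> g z"
  unfolding moreau_env_def using moreau_env_term_lower_bound[OF assms]
  by (intro cINF_greatest) auto

lemma moreau_env_le_term:
  fixes g :: "'z::real_normed_vector \<Rightarrow> real"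
  assumes "lipschitz_on L UNIV g" and "0 < \<mu>"
  shows "moreau_env \<mu> g z \<le> g w + norm (w - z)^2 / (2*\<mu>)"
  unfolding moreau_env_def
proof (rule cINF_lower)
  show "bdd_below (range (\<lambda>w. g w + norm (w - z)^2 / (2*\<mu>)))"
    using moreau_env_term_lower_bound[OF assms] by (intro bdd_belowI) blast
qed simp

text \<open>Compare with the point \<open>z + (\<mu>'/\<mu>)(w - z)\<close> of the segment from \<open>z\<close> to \<open>w\<close>.\<close>
lemma moreau_env_antimono:
  fixes g :: "'z::real_normed_vector \<Rightarrow> real"
  assumes lip: "lipschitz_on L UNIV g" and \<mu>: "0 < \<mu>'" "\<mu>' \<le> \<mu>"
  shows "moreau_env \<mu>' g z \<le> moreau_env \<mu> g z + (\<mu> - \<mu>') * L^2 / 2"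
proof -
  define t where "t = \<mu>' / \<mu>"
  have t: "0 < t" "t \<le> 1" using \<mu> unfolding t_def by auto
  have "moreau_env \<mu>' g z - (\<mu> - \<mu>') * L^2 / 2 \<le> g w + norm (w - z)^2 / (2*\<mu>)" for w
  proof -
    define r where "r = norm (w - z)"
    define w' where "w' = z + t *\<^sub>R (w - z)"
    have "norm (w' - z) = t * r" unfolding w'_def r_def using t by simp
    moreover have "dist w' w = (1 - t) * r"
    proof -
      have "w' - w = (1 - t) *\<^sub>R (z - w)" unfolding w'_def by (simp add: algebra_simps)
      then show ?thesis unfolding r_def dist_norm using t by (simp add: norm_minus_commute)
    qed
    ultimately have "moreau_env \<mu>' g z \<le> g w + L * ((1 - t) * r) + (t * r)^2 / (2*\<mu>')"
      using moreau_env_le_term[OF lip \<mu>(1), of z w'] lipschitz_on_UNIV_le_add[OF lip, of w' w]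
      by simp
    moreover have "(t * r)^2 / (2*\<mu>') = t * r^2 / (2*\<mu>)"
      unfolding t_def using \<mu> by (simp add: field_simps power2_eq_square)
    moreover have "(1 - t) * (L * r) \<le> (1 - t) * (r^2 / (2*\<mu>) + \<mu> * L^2 / 2)"
      using mult_le_sq_div_add_sq[of \<mu> L r] \<mu> t by (intro mult_left_mono) auto
    moreover have "(1 - t) * (r^2 / (2*\<mu>) + \<mu> * L^2 / 2)
        = r^2 / (2*\<mu>) - t * r^2 / (2*\<mu>) + (\<mu> - \<mu>') * L^2 / 2"
      unfolding t_def using \<mu> by (simp add: field_simps)
    ultimately show ?thesis unfolding r_def by (simp add: algebra_simps)
  qed
  then have "moreau_env \<mu>' g z - (\<mu> - \<mu>') * L^2 / 2 \<le> moreau_env \<mu> g z"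
    unfolding moreau_env_def[of \<mu>] by (intro cINF_greatest) auto
  then show ?thesis by simp
qed

section \<open>Rates from bounded descent\<close>

lemma sum_le_of_descent:
  fixes E a :: "nat \<Rightarrow> real"
  assumes descent: "\<And>n. k \<le> n \<Longrightarrow> E (Suc n) \<le> E n - a n"
    and nonneg: "\<And>n. k \<le> n \<Longrightarrow> 0 \<le> a n"
    and bounded: "\<And>n. k \<le> n \<Longrightarrow> B \<le> E n"
    and "k \<le> klo"
  shows "(\<Sum>n=klo..khi. a n) \<le> E k - B"
proof -
  have "(\<Sum>n=klo..khi. a n) \<le> (\<Sum>n=k..khi. a n)"
    using assms(4) nonneg by (intro sum_mono2) auto
  also have "\<dots> \<le> (\<Sum>n=k..khi. E n - E (Suc n))"
    using descent by (intro sum_mono) force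
  also have "\<dots> \<le> E k - B"
  proof (cases "k \<le> Suc khi")
    case True
    then show ?thesis
      using sum_Suc_diff[OF True, of "\<lambda>n. - E n"] bounded[of "Suc khi"] by simp
  next
    case False
    then show ?thesis using bounded[of k] by simp
  qed
  finally show ?thesis .
qed

lemma Min_le_sqrt_weighted_sum:
  fixes w r :: "'a \<Rightarrow> real"
  assumes A: "finite A" "A \<noteq> {}"
    and w: "\<And>n. n \<in> A \<Longrightarrow> 0 < w n" and r: "\<And>n. n \<in> A \<Longrightarrow> 0 \<le> r n"
    and C: "(\<Sum>n\<in>A. w n * (r n)^2) \<le> C"
  shows "(MIN n\<in>A. r n) \<le> sqrt (C / (\<Sum>n\<in>A. w n))"
proof (rule real_le_rsqrt)
  define m where "m = (MIN n\<in>A. r n)"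
  have "m \<in> r ` A" unfolding m_def using A by (intro Min_in) auto
  then have m0: "0 \<le> m" using r by blast
  have "(\<Sum>n\<in>A. w n) * m^2 = (\<Sum>n\<in>A. w n * m^2)"
    by (rule sum_distrib_right)
  also have "\<dots> \<le> (\<Sum>n\<in>A. w n * (r n)^2)"
    using A w m0 by (intro sum_mono mult_left_mono power_mono) (auto simp: m_def less_imp_le)
  also have "\<dots> \<le> C" by (fact C)
  finally show "m^2 \<le> C / (\<Sum>n\<in>A. w n)"
    using sum_pos[OF A w] by (simp add: field_simps)
qed

lemma min_residual_rate_of_descent:
  fixes E w r r' \<mu> :: "nat \<Rightarrow> real"
  assumes descent: "\<And>n. 1 \<le> n \<Longrightarrow> E (Suc n) \<le> E n - w n * (r n)^2"
    and bounded: "\<And>n. 1 \<le> n \<Longrightarrow> B \<le> E n"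
    and \<kappa>: "0 < \<kappa>" and \<mu>: "\<And>n. 1 \<le> n \<Longrightarrow> 0 < \<mu> n"
    and w: "\<And>n. 1 \<le> n \<Longrightarrow> \<kappa> * \<mu> n \<le> w n"
    and r': "\<And>n. 1 \<le> n \<Longrightarrow> 0 \<le> r' n \<and> r' n \<le> r n"
  shows "\<exists>chi>0. \<forall>klo khi::nat. 1 \<le> klo \<and> klo \<le> khi \<longrightarrow>
           (MIN n\<in>{klo..khi}. r' n) \<le> sqrt (chi / (\<Sum>n=klo..khi. \<mu> n))"
proof (intro exI conjI allI impI)
  define C where "C = \<bar>E 1 - B\<bar> + 1"
  show "C / \<kappa> > 0" unfolding C_def using \<kappa> by simp
  have w_pos: "0 < w n" if "1 \<le> n" for n
    using mult_pos_pos[OF \<kappa> \<mu>[OF that]] w[OF that] by linarith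
  fix klo khi :: nat assume k: "1 \<le> klo \<and> klo \<le> khi"
  have "(\<Sum>n=klo..khi. \<kappa> * \<mu> n * (r' n)^2) \<le> (\<Sum>n=klo..khi. w n * (r n)^2)"
    using k \<kappa> \<mu> w w_pos r' by (intro sum_mono mult_mono power_mono) (auto intro: less_imp_le)
  also have "\<dots> \<le> E 1 - B"
    using k descent bounded w_pos[THEN less_imp_le]
    by (intro sum_le_of_descent[where k = 1]) auto
  also have "\<dots> \<le> C" unfolding C_def by simp
  finally have "(MIN n\<in>{klo..khi}. r' n) \<le> sqrt (C / (\<Sum>n=klo..khi. \<kappa> * \<mu> n))"
    using k \<kappa> \<mu> r' by (intro Min_le_sqrt_weighted_sum) auto
  then show "(MIN n\<in>{klo..khi}. r' n) \<le> sqrt (C / \<kappa> / (\<Sum>n=klo..khi. \<mu> n))"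
    by (simp add: sum_distrib_left[symmetric])
qed

lemma stepsizes_ge_proportional:
  fixes \<mu> \<gamma> :: "nat \<Rightarrow> real" and \<eta> w1 w2 \<beta> :: real
  assumes \<mu>: "\<And>n. 1 \<le> n \<Longrightarrow> 0 < \<mu> n \<and> \<mu> n \<le> 1 / (2 * \<eta>)"
    and "0 < \<eta>" "0 \<le> w1" "0 < w2" "0 < \<beta>"
    and \<gamma>: "\<And>n. 1 \<le> n \<Longrightarrow> \<beta> / (w1 + w2 / \<mu> n) \<le> \<gamma> n"
  shows "\<exists>\<kappa>>0. \<forall>n\<ge>1. \<kappa> * \<mu> n \<le> \<gamma> n"
proof (intro exI conjI allI impI)
  show "0 < \<beta> / (w1 / (2 * \<eta>) + w2)" using assms by (intro divide_pos_pos add_nonneg_pos) auto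
  fix n :: nat assume n: "1 \<le> n"
  have "w1 * \<mu> n \<le> w1 / (2 * \<eta>)"
    using mult_left_mono[of "\<mu> n" "1 / (2 * \<eta>)" w1] \<mu>[OF n] assms by simp
  then have "\<beta> * \<mu> n / (w1 / (2 * \<eta>) + w2) \<le> \<beta> * \<mu> n / (w1 * \<mu> n + w2)"
    using assms \<mu>[OF n] by (intro divide_left_mono mult_pos_pos add_nonneg_pos) auto
  also have "\<dots> = \<beta> / (w1 + w2 / \<mu> n)" using \<mu>[OF n] by (simp add: field_simps)
  also have "\<dots> \<le> \<gamma> n" using \<gamma>[OF n] .
  finally show "\<beta> / (w1 / (2 * \<eta>) + w2) * \<mu> n \<le> \<gamma> n" by simp
qed

theorem theorem2:
  fixes \<phi> :: "'x::euclidean_space \<Rightarrow> ereal"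
    and h :: "'x \<Rightarrow> real"
    and S :: "'x \<Rightarrow> 'z::euclidean_space"
    and g :: "'z \<Rightarrow> real"
    and \<mu> \<gamma> :: "nat \<Rightarrow> real"
    and x :: "nat \<Rightarrow> 'x"
    and Lg \<eta> c M w1 w2 \<beta> \<gamma>bar :: real
  defines "F \<equiv> (\<lambda>y. h y + g (S y))"
    and "Fn \<equiv> (\<lambda>n y. h y + moreau_env (\<mu> n) g (S y))"
  assumes phi_proper: "proper_fun \<phi>" and phi_lsc: "lsc_fun \<phi>" and phi_convex: "econvex \<phi>"
    and h_diff: "\<And>y. h differentiable (at y)"
    and h_lip: "\<exists>L. lipschitz_on L (edom \<phi>) (grad h)"
    and S_C1: "\<exists>S'. (\<forall>y. (S has_derivative blinfun_apply (S' y)) (at y)) \<and> continuous_on UNIV S'"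
    and g_lip: "Lg > 0" "lipschitz_on Lg UNIV g"
    and g_weak: "\<eta> > 0" "convex_on UNIV (\<lambda>z. g z + \<eta> / 2 * norm z ^ 2)"
    and argmin_ne: "\<exists>xs. \<forall>y. ereal (F xs) + \<phi> xs \<le> ereal (F y) + \<phi> y"
    and x1: "x 1 \<in> edom \<phi>"
    and c: "0 < c" "c < 1"
    and mu_pos: "\<And>n. n \<ge> 1 \<Longrightarrow> 0 < \<mu> n \<and> \<mu> n \<le> 1 / (2 * \<eta>)"
    and mu_lim: "(\<lambda>n. \<mu> n) \<longlonglongrightarrow> 0"
    and mu_div: "\<not> summable \<mu>"
    and M: "M \<ge> 1"
    and mu_ratio: "\<And>n. n \<ge> 1 \<Longrightarrow> 1 / M \<le> \<mu> (Suc n) / \<mu> n \<and> \<mu> (Suc n) / \<mu> n \<le> 1"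
    and varpi: "w1 \<ge> 0" "w2 > 0"
    and Fn_lip: "\<And>n. n \<ge> 1 \<Longrightarrow> lipschitz_on (w1 + w2 / \<mu> n) (edom \<phi>) (grad (Fn n))"
    and armijo: "\<And>n. n \<ge> 1 \<Longrightarrow>
        ereal (Fn n (prox (\<gamma> n) \<phi> (x n - \<gamma> n *\<^sub>R grad (Fn n) (x n))))
          + \<phi> (prox (\<gamma> n) \<phi> (x n - \<gamma> n *\<^sub>R grad (Fn n) (x n)))
        \<le> ereal (Fn n (x n)) + \<phi> (x n) - ereal (c * \<gamma> n * (resid (\<gamma> n) (Fn n) \<phi> (x n))^2)"
    and gamma_bounds: "\<beta> > 0" "\<gamma>bar > 0"
      "\<And>n. n \<ge> 1 \<Longrightarrow> \<beta> / (w1 + w2 / \<mu> n) \<le> \<gamma> n \<and> \<gamma> n \<le> \<gamma>bar"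
    and iter: "\<And>n. n \<ge> 1 \<Longrightarrow> x (Suc n) = prox (\<gamma> n) \<phi> (x n - \<gamma> n *\<^sub>R grad (Fn n) (x n))"
  shows "\<exists>chi>0. \<forall>klo khi::nat. 1 \<le> klo \<and> klo \<le> khi \<longrightarrow>
           (MIN n\<in>{klo..khi}. resid \<gamma>bar (Fn n) \<phi> (x n))
             \<le> sqrt (chi / (\<Sum>n=klo..khi. \<mu> n))"
proof -
  (* Only the Lipschitz continuity of g, the Armijo inequality and the step-size bounds are used. *)
  have \<mu>: "0 < \<mu> n" "\<mu> (Suc n) \<le> \<mu> n" if "n \<ge> 1" for n
    using mu_pos[OF that] mu_ratio[OF that] by (auto simp: divide_le_eq_1)
  have "\<beta> / (w1 + w2 / \<mu> n) \<le> \<gamma> n" if "n \<ge> 1" for n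
    using gamma_bounds(3)[OF that] by simp
  then obtain \<kappa> where \<kappa>: "0 < \<kappa>" and \<gamma>_lb: "\<And>n. n \<ge> 1 \<Longrightarrow> \<kappa> * \<mu> n \<le> \<gamma> n"
    using stepsizes_ge_proportional[where \<mu> = \<mu> and \<gamma> = \<gamma>,
        OF mu_pos g_weak(1) varpi gamma_bounds(1)]
    by blast
  have \<gamma>_pos: "0 < \<gamma> n" if "n \<ge> 1" for n
    using \<gamma>_lb[OF that] mult_pos_pos[OF \<kappa> \<mu>(1)[OF that]] by linarith
  obtain v where v: "\<And>n. n \<ge> 1 \<Longrightarrow> \<phi> (x n) = ereal (v n)"
    using prox_iterates_finite[OF phi_proper phi_lsc phi_convex x1 \<gamma>_pos iter] by metis
  define R where "R n = resid (\<gamma> n) (Fn n) \<phi> (x n)" for n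
  define E where "E n = Fn n (x n) + v n + \<mu> n * Lg^2 / 2" for n
  have descent: "E (Suc n) \<le> E n - c * \<gamma> n * (R n)^2" if "n \<ge> 1" for n
  proof -
    have "Fn n (x (Suc n)) + v (Suc n) \<le> Fn n (x n) + v n - c * \<gamma> n * (R n)^2"
      using armijo[OF that] v[OF that] v[of "Suc n"] that unfolding iter[OF that, symmetric] R_def
      by simp
    moreover have "Fn (Suc n) (x (Suc n)) \<le> Fn n (x (Suc n)) + (\<mu> n - \<mu> (Suc n)) * Lg^2 / 2"
      unfolding Fn_def using moreau_env_antimono[OF g_lip(2) \<mu>(1)[of "Suc n"] \<mu>(2)[OF that]] that
      by simp
    ultimately show ?thesis unfolding E_def by (simp add: left_diff_distrib diff_divide_distrib)
  qed
  obtain xs where xs: "\<And>y. ereal (F xs) + \<phi> xs \<le> ereal (F y) + \<phi> y" using argmin_ne by blast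
  have "\<phi> xs < \<infinity>" using xs[of "x 1"] v[of 1] by (cases "\<phi> xs") auto
  then obtain vs where vs: "\<phi> xs = ereal vs"
    using phi_proper unfolding proper_fun_def by (cases "\<phi> xs") auto
  have bounded: "F xs + vs \<le> E n" if "n \<ge> 1" for n
  proof -
    have "F (x n) \<le> Fn n (x n) + \<mu> n * Lg^2 / 2"
      unfolding F_def Fn_def using moreau_env_lower_bound[OF g_lip(2) \<mu>(1)[OF that], of "S (x n)"]
      by simp
    then show ?thesis using xs[of "x n"] v[OF that] vs unfolding E_def by simp
  qed
  have resid_le: "0 \<le> resid \<gamma>bar (Fn n) \<phi> (x n) \<and> resid \<gamma>bar (Fn n) \<phi> (x n) \<le> R n" if "n \<ge> 1" for n
  proof
    show "0 \<le> resid \<gamma>bar (Fn n) \<phi> (x n)" by (simp add: resid_def)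
    show "resid \<gamma>bar (Fn n) \<phi> (x n) \<le> R n"
      using resid_antimono_stepsize[OF phi_proper phi_lsc phi_convex \<gamma>_pos[OF that]]
        gamma_bounds(3)[OF that] unfolding R_def by blast
  qed
  have "c * \<kappa> * \<mu> n \<le> c * \<gamma> n" if "n \<ge> 1" for n
    using \<gamma>_lb[OF that] c by (simp add: mult.assoc)
  then show ?thesis
    using descent bounded resid_le \<mu>(1) c \<kappa>
    by (intro min_residual_rate_of_descent[where E = E and B = "F xs + vs"
          and w = "\<lambda>n. c * \<gamma> n" and r = R and \<kappa> = "c * \<kappa>"]) auto
qed

end
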